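(* Let $K\in\mathbb N$, $p_1,\dots,p_K>0$ with $\sum_{k=1}^K p_k=1$, and $\sigma_1^2,\dots,\sigma_K^2>0$. Let $h\in\mathbb C$ be distributed as $h\sim\sum_{k=1}^K p_k\mathcal N_{\mathbb C}(0,\sigma_k^2)$, let $n\sim\mathcal N_{\mathbb C}(0,\eta^2)$ with $\eta^2>0$ be independent of $h$, and let $r=Q(h+n)$ where $Q(x)=\frac1{\sqrt2}(\operatorname{sign}(\operatorname{Re}x)+\mathrm j\operatorname{sign}(\operatorname{Im}x))$. Then the conditional mean estimator is $$\mathbb E[h\mid r]=\sqrt{\tfrac{2}{\pi}}\sum_{k=1}^K p_k\frac{\sigma_k^2}{\sqrt{\sigma_k^2+\eta^2}}\,r.$$
   Context: $\mathcal N_{\mathbb C}(0,\sigma^2)$ denotes the circularly symmetric complex Gaussian distribution with variance $\sigma^2$. *)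

theory Defs
  imports "HOL-Probability.Probability"
begin

definition Qb :: "complex \<Rightarrow> complex" where
  "Qb x = Complex (sgn (Re x)) (sgn (Im x)) / complex_of_real (sqrt 2)"

text \<open>Density (w.r.t. Lebesgue measure on C = R^2) of the circularly symmetric
  complex Gaussian N_C(0, s2).\<close>
definition cgauss_density :: "real \<Rightarrow> complex \<Rightarrow> real" where
  "cgauss_density s2 z = exp (- (cmod z)\<^sup>2 / s2) / (pi * s2)"

definition complex_cond_exp ::
  "'a measure \<Rightarrow> 'a measure \<Rightarrow> ('a \<Rightarrow> complex) \<Rightarrow> 'a \<Rightarrow> complex" where
  "complex_cond_exp M F f x =
     Complex (real_cond_exp M F (\<lambda>y. Re (f y)) x) (real_cond_exp M F (\<lambda>y. Im (f y)) x)"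

end

theory Submission
  imports Defs "HOL-Real_Asymp.Real_Asymp"
begin

(* Q(h + n) only records the signs of Re (h + n) and Im (h + n), so it takes finitely many values
   and E[h | Q(h + n)] is determined by the integrals of Re h and Im h over the events
   {sgn (Re (h + n)) = s1, sgn (Im (h + n)) = s2}. Within the k-th mixture component the pairs
   (Re h, Re n) and (Im h, Im n) are independent, and each consists of independent centred normals
   X, U of variances sigma_k^2/2 and eta^2/2; hence these integrals factor into one-dimensional ones.
   By symmetry P(sgn (X + U) = s) = |s|/2, and Stein's identity x phi(x) = -(sigma_k^2/2) phi'(x)
   gives E[X; sgn (X + U) = s] = s sigma_k^2 / (2 sqrt (pi (sigma_k^2 + eta^2))). Averaging over the
   components yields E[Re h; event] = C Re r P(event) with r the value of Q on the event and C the
   claimed gain, and likewise for Im h. *)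

section \<open>Real Gaussian densities\<close>

(* The density of N(0, s/2), the law of the real and of the imaginary part of N_C(0, s). *)
definition rgauss_density :: "real \<Rightarrow> real \<Rightarrow> real" where
  "rgauss_density s x = exp (- x\<^sup>2 / s) / sqrt (pi * s)"

lemma rgauss_density_eq_normal_density:
  "s > 0 \<Longrightarrow> rgauss_density s = normal_density 0 (sqrt (s / 2))"
  by (auto simp: rgauss_density_def normal_density_def fun_eq_iff)

lemma rgauss_density_minus [simp]: "rgauss_density s (- x) = rgauss_density s x"
  by (simp add: rgauss_density_def)

lemma borel_measurable_rgauss_density [measurable]: "rgauss_density s \<in> borel_measurable borel"
  unfolding rgauss_density_def by measurable

lemma integrable_rgauss_density [simp]: "s > 0 \<Longrightarrow> integrable lborel (rgauss_density s)"
  by (simp add: rgauss_density_eq_normal_density)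

lemma integral_rgauss_density [simp]: "s > 0 \<Longrightarrow> (\<integral>x. rgauss_density s x \<partial>lborel) = 1"
  by (simp add: rgauss_density_eq_normal_density)

lemma integrable_rgauss_density_moment_1:
  "s > 0 \<Longrightarrow> integrable lborel (\<lambda>x. x * rgauss_density s x)"
  using integrable_normal_moment_nz_1 by (simp add: rgauss_density_eq_normal_density mult.commute)

lemma cgauss_density_nonneg: "s > 0 \<Longrightarrow> 0 \<le> cgauss_density s z"
  by (simp add: cgauss_density_def)

lemma cgauss_density_eq_rgauss_density:
  assumes "s > 0"
  shows "cgauss_density s z = rgauss_density s (Re z) * rgauss_density s (Im z)"
proof -
  have "sqrt (pi * s) * sqrt (pi * s) = pi * s"
    using assms by simp
  then show ?thesis
    unfolding cgauss_density_def rgauss_density_def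
    by (simp add: cmod_power2 exp_add[symmetric] add_divide_distrib diff_divide_distrib)
qed

lemma integral_rgauss_density_tail_moment:
  assumes s: "s > 0"
  shows "(\<integral>x. indicator {t<..} x * (x * rgauss_density s x) \<partial>lborel) = s / 2 * rgauss_density s t"
proof -
  define F where "F x = - (s / 2) * rgauss_density s x" for x
  have F_deriv: "(F has_real_derivative x * rgauss_density s x) (at x)" for x
    unfolding F_def rgauss_density_def
    using s by (auto intro!: derivative_eq_intros simp: field_simps power2_eq_square)
  have F_at_top: "(F \<longlongrightarrow> 0) at_top"
    unfolding F_def rgauss_density_def using s by real_asymp
  have tail: "einterval (ereal t) \<infinity> = {t<..}"
    by (auto simp: einterval_def)
  have "(LBINT x=ereal t..\<infinity>. x * rgauss_density s x) = 0 - F t"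
  proof (rule interval_integral_FTC_integrable[where F = F])
    show "(F has_vector_derivative x * rgauss_density s x) (at x)" for x
      using F_deriv by (simp add: has_real_derivative_iff_has_vector_derivative)
    show "isCont (\<lambda>x. x * rgauss_density s x) x" for x
      unfolding rgauss_density_def using s by (intro continuous_intros) auto
    show "set_integrable lborel (einterval (ereal t) \<infinity>) (\<lambda>x. x * rgauss_density s x)"
      unfolding tail set_integrable_def
      by (rule integrable_mult_indicator) (simp_all add: integrable_rgauss_density_moment_1 s)
    show "((F \<circ> real_of_ereal) \<longlongrightarrow> F t) (at_right (ereal t))"
      unfolding ereal_tendsto_simps
      by (rule tendsto_within_subset[OF DERIV_isCont[OF F_deriv, unfolded isCont_def]]) simp
    show "((F \<circ> real_of_ereal) \<longlongrightarrow> 0) (at_left \<infinity>)"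
      unfolding ereal_tendsto_simps by (rule F_at_top)
  qed simp
  then show ?thesis
    by (simp add: interval_lebesgue_integral_def set_lebesgue_integral_def tail F_def)
qed

lemma integral_rgauss_density_mult:
  assumes s: "s > 0" and e: "e > 0"
  shows "(\<integral>x. rgauss_density s x * rgauss_density e x \<partial>lborel) = 1 / sqrt (pi * (s + e))"
proof -
  define t where "t = s * e / (s + e)"
  have t: "t > 0"
    using s e by (simp add: t_def)
  have "rgauss_density s x * rgauss_density e x = rgauss_density t x / sqrt (pi * (s + e))" for x
  proof -
    have "exp (- x\<^sup>2 / s) * exp (- x\<^sup>2 / e) = exp (- x\<^sup>2 / t)"
      unfolding exp_add[symmetric] t_def using s e by (simp add: field_simps)
    moreover have "sqrt (pi * s) * sqrt (pi * e) = sqrt (pi * t) * sqrt (pi * (s + e))"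
      unfolding real_sqrt_mult[symmetric] t_def using s e by (simp add: field_simps)
    ultimately show ?thesis
      unfolding rgauss_density_def using s e t by (simp add: field_simps)
  qed
  then show ?thesis
    using t by simp
qed

section \<open>The sign of a sum of independent real variables\<close>

lemma
  fixes f :: "'a \<Rightarrow> real" and g :: "'b \<Rightarrow> real"
  assumes "sigma_finite_measure M1" "sigma_finite_measure M2"
    and f: "integrable M1 f" and g: "integrable M2 g"
  shows integrable_pair_measure_mult: "integrable (M1 \<Otimes>\<^sub>M M2) (\<lambda>(x, y). f x * g y)"
    and integral_pair_measure_mult:
      "integral\<^sup>L (M1 \<Otimes>\<^sub>M M2) (\<lambda>(x, y). f x * g y) = integral\<^sup>L M1 f * integral\<^sup>L M2 g"
proof -
  interpret pair_sigma_finite M1 M2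
    using assms(1,2) by (simp add: pair_sigma_finite_def)
  have [measurable]: "f \<in> borel_measurable M1" "g \<in> borel_measurable M2"
    using f g by auto
  show int: "integrable (M1 \<Otimes>\<^sub>M M2) (\<lambda>(x, y). f x * g y)"
  proof (rule Fubini_integrable)
    have "integrable M1 (\<lambda>x. norm (f x) * (\<integral>y. norm (g y) \<partial>M2))"
      using f by (intro integrable_mult_left) auto
    then show "integrable M1 (\<lambda>x. \<integral>y. norm (case (x, y) of (x, y) \<Rightarrow> f x * g y) \<partial>M2)"
      by (simp add: abs_mult)
  qed (use g in auto)
  show "integral\<^sup>L (M1 \<Otimes>\<^sub>M M2) (\<lambda>(x, y). f x * g y) = integral\<^sup>L M1 f * integral\<^sup>L M2 g"
    using integral_fst'[OF int] by simp
qed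

lemma integral_lborel_uminus: "(\<integral>x. f (- x) \<partial>lborel) = (\<integral>x. f x \<partial>lborel)"
  for f :: "real \<Rightarrow> real"
  using lborel_integral_real_affine[of "-1" f 0] by simp

lemma integral_sgn_add_eq_0:
  fixes f :: "real \<Rightarrow> real"
  shows "(\<integral>a. (if sgn (a + u) = 0 then 1 else 0) * f a \<partial>lborel) = 0"
proof -
  have "AE a in lborel. (if sgn (a + u) = 0 then 1 else 0) * f a = 0"
    using AE_lborel_singleton[of "- u"] by eventually_elim (auto simp: sgn_if)
  then show ?thesis
    by (simp add: integral_eq_zero_AE)
qed

lemma integral_sgn_add_minus_one:
  fixes f :: "real \<Rightarrow> real"
  assumes "\<And>x. f (- x) = f x"
  shows "(\<integral>a. (if sgn (a + u) = -1 then 1 else 0) * f a \<partial>lborel)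
    = (\<integral>a. (if sgn (a + - u) = 1 then 1 else 0) * f a \<partial>lborel)"
  by (subst integral_lborel_uminus[symmetric]) (auto simp: sgn_if assms intro!: Bochner_Integration.integral_cong)

lemma integral_sgn_add_one_plus_minus_one:
  fixes f :: "real \<Rightarrow> real"
  assumes f: "integrable lborel f"
  shows "(\<integral>a. (if sgn (a + u) = 1 then 1 else 0) * f a \<partial>lborel)
    + (\<integral>a. (if sgn (a + u) = -1 then 1 else 0) * f a \<partial>lborel) = (\<integral>a. f a \<partial>lborel)"
proof -
  have [measurable]: "f \<in> borel_measurable borel"
    using f by auto
  have int: "integrable lborel (\<lambda>a. (if sgn (a + u) = s then 1 else 0) * f a)" for s
    by (rule Bochner_Integration.integrable_bound[OF f]) auto
  have "(\<integral>a. (if sgn (a + u) = 1 then 1 else 0) * f a \<partial>lborel)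
      + (\<integral>a. (if sgn (a + u) = -1 then 1 else 0) * f a \<partial>lborel)
      + (\<integral>a. (if sgn (a + u) = 0 then 1 else 0) * f a \<partial>lborel)
      = (\<integral>a. (if sgn (a + u) = 1 then 1 else 0) * f a + (if sgn (a + u) = -1 then 1 else 0) * f a
          + (if sgn (a + u) = 0 then 1 else 0) * f a \<partial>lborel)"
    using int by simp
  also have "\<dots> = (\<integral>a. f a \<partial>lborel)"
    by (intro Bochner_Integration.integral_cong) (auto simp: sgn_if)
  finally show ?thesis
    by (simp add: integral_sgn_add_eq_0)
qed

lemma
  fixes f g :: "real \<Rightarrow> real"
  assumes f: "integrable lborel f" "\<And>x. f (- x) = f x" "(\<integral>x. f x \<partial>lborel) = 1"
    and g: "integrable lborel g" "\<And>x. g (- x) = g x" "(\<integral>x. g x \<partial>lborel) = 1"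
    and s: "s \<in> {-1, 0, 1}"
  shows integrable_sgn_add_even_densities:
      "integrable (lborel \<Otimes>\<^sub>M lborel) (\<lambda>(a, u). (if sgn (a + u) = s then 1 else 0) * (f a * g u))"
    and integral_sgn_add_even_densities:
      "integral\<^sup>L (lborel \<Otimes>\<^sub>M lborel) (\<lambda>(a, u). (if sgn (a + u) = s then 1 else 0) * (f a * g u))
        = \<bar>s\<bar> / 2"
proof -
  define P where "P s u = (\<integral>a. (if sgn (a + u) = s then 1 else 0) * f a \<partial>lborel)" for s u
  have [measurable]: "f \<in> borel_measurable borel" "g \<in> borel_measurable borel"
    using f(1) g(1) by auto
  have int: "integrable (lborel \<Otimes>\<^sub>M lborel) (\<lambda>(a, u). (if sgn (a + u) = s then 1 else 0) * (f a * g u))"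
    for s
    by (rule Bochner_Integration.integrable_bound[
          OF integrable_pair_measure_mult[OF _ _ integrable_abs[OF f(1)] integrable_abs[OF g(1)]]])
       (auto simp: abs_mult lborel.sigma_finite_measure_axioms split: prod.splits)
  then show "integrable (lborel \<Otimes>\<^sub>M lborel) (\<lambda>(a, u). (if sgn (a + u) = s then 1 else 0) * (f a * g u))" .
  have inner: "(\<integral>a. (if sgn (a + u) = s then 1 else 0) * (f a * g u) \<partial>lborel) = g u * P s u" for s u
    unfolding P_def by (subst integral_mult_right_zero[symmetric]) (simp add: ac_simps)
  have fubini: "integral\<^sup>L (lborel \<Otimes>\<^sub>M lborel) (\<lambda>(a, u). (if sgn (a + u) = s then 1 else 0) * (f a * g u))
      = (\<integral>u. g u * P s u \<partial>lborel)"
    and int_P: "integrable lborel (\<lambda>u. g u * P s u)" for s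
    using lborel_pair.integral_snd[OF int[of s], unfolded inner]
      lborel_pair.integrable_snd[OF int[of s], unfolded inner]
    by simp_all
  have "(\<integral>u. g u * P (-1) u \<partial>lborel) = (\<integral>u. g u * P 1 u \<partial>lborel)"
    unfolding P_def integral_sgn_add_minus_one[of f, OF f(2)]
    by (subst integral_lborel_uminus[symmetric]) (simp add: g(2))
  moreover have "(\<integral>u. g u * P 1 u \<partial>lborel) + (\<integral>u. g u * P (-1) u \<partial>lborel) = 1"
    using int_P[of 1] int_P[of "-1"] f(3) g(3)
    by (simp add: P_def integral_sgn_add_one_plus_minus_one[OF f(1)]
        flip: distrib_left Bochner_Integration.integral_add)
  ultimately show "integral\<^sup>L (lborel \<Otimes>\<^sub>M lborel) (\<lambda>(a, u). (if sgn (a + u) = s then 1 else 0) * (f a * g u))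
      = \<bar>s\<bar> / 2"
    using s by (auto simp: fubini P_def integral_sgn_add_eq_0)
qed

lemma integral_sgn_add_rgauss_moment_1:
  assumes \<sigma>: "\<sigma> > 0" and s: "s \<in> {-1, 0, 1}"
  shows "(\<integral>a. (if sgn (a + u) = s then 1 else 0) * (a * rgauss_density \<sigma> a) \<partial>lborel)
    = s * \<sigma> / 2 * rgauss_density \<sigma> u"
proof -
  have pos: "(\<integral>a. (if sgn (a + u) = 1 then 1 else 0) * (a * rgauss_density \<sigma> a) \<partial>lborel)
      = \<sigma> / 2 * rgauss_density \<sigma> u" for u
  proof -
    have "(\<integral>a. (if sgn (a + u) = 1 then 1 else 0) * (a * rgauss_density \<sigma> a) \<partial>lborel)
        = (\<integral>a. indicator {- u<..} a * (a * rgauss_density \<sigma> a) \<partial>lborel)"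
      by (intro Bochner_Integration.integral_cong) (auto simp: sgn_if indicator_def)
    then show ?thesis
      using integral_rgauss_density_tail_moment[OF \<sigma>, of "- u"] by simp
  qed
  have neg: "(\<integral>a. (if sgn (a + u) = -1 then 1 else 0) * (a * rgauss_density \<sigma> a) \<partial>lborel)
      = - (\<sigma> / 2 * rgauss_density \<sigma> u)"
  proof -
    have "(\<integral>a. (if sgn (a + u) = -1 then 1 else 0) * (a * rgauss_density \<sigma> a) \<partial>lborel)
        = (\<integral>a. - ((if sgn (a + - u) = 1 then 1 else 0) * (a * rgauss_density \<sigma> a)) \<partial>lborel)"
      by (subst integral_lborel_uminus[symmetric])
         (auto simp: sgn_if intro!: Bochner_Integration.integral_cong)
    then show ?thesis
      using pos[of "- u"] by simp
  qed
  show ?thesis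
    using s pos neg integral_sgn_add_eq_0 by auto
qed

lemma
  assumes \<sigma>: "\<sigma> > 0" and \<eta>: "\<eta> > 0" and s: "s \<in> {-1, 0, 1}"
  shows integrable_sgn_add_rgauss_pair_moment_1:
      "integrable (lborel \<Otimes>\<^sub>M lborel)
        (\<lambda>(a, u). (if sgn (a + u) = s then 1 else 0) * a * (rgauss_density \<sigma> a * rgauss_density \<eta> u))"
    and integral_sgn_add_rgauss_pair_moment_1:
      "integral\<^sup>L (lborel \<Otimes>\<^sub>M lborel)
        (\<lambda>(a, u). (if sgn (a + u) = s then 1 else 0) * a * (rgauss_density \<sigma> a * rgauss_density \<eta> u))
        = s * \<sigma> / (2 * sqrt (pi * (\<sigma> + \<eta>)))"
proof -
  have "integrable (lborel \<Otimes>\<^sub>M lborel) (\<lambda>(a, u). \<bar>a * rgauss_density \<sigma> a\<bar> * \<bar>rgauss_density \<eta> u\<bar>)"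
    using \<sigma> \<eta> by (intro integrable_pair_measure_mult integrable_abs integrable_rgauss_density_moment_1)
      (auto intro: lborel.sigma_finite_measure_axioms)
  then show int: "integrable (lborel \<Otimes>\<^sub>M lborel)
      (\<lambda>(a, u). (if sgn (a + u) = s then 1 else 0) * a * (rgauss_density \<sigma> a * rgauss_density \<eta> u))"
    by (rule Bochner_Integration.integrable_bound) (auto simp: abs_mult split: prod.splits)
  have inner: "(\<integral>a. (if sgn (a + u) = s then 1 else 0) * a * (rgauss_density \<sigma> a * rgauss_density \<eta> u) \<partial>lborel)
      = s * \<sigma> / 2 * (rgauss_density \<sigma> u * rgauss_density \<eta> u)" for u
  proof -
    have "(\<integral>a. (if sgn (a + u) = s then 1 else 0) * a * (rgauss_density \<sigma> a * rgauss_density \<eta> u) \<partial>lborel)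
        = (\<integral>a. (if sgn (a + u) = s then 1 else 0) * (a * rgauss_density \<sigma> a) \<partial>lborel) * rgauss_density \<eta> u"
      by (subst integral_mult_left_zero[symmetric], rule Bochner_Integration.integral_cong)
         (simp_all add: ac_simps)
    then show ?thesis
      by (simp add: integral_sgn_add_rgauss_moment_1[OF \<sigma> s])
  qed
  show "integral\<^sup>L (lborel \<Otimes>\<^sub>M lborel)
      (\<lambda>(a, u). (if sgn (a + u) = s then 1 else 0) * a * (rgauss_density \<sigma> a * rgauss_density \<eta> u))
      = s * \<sigma> / (2 * sqrt (pi * (\<sigma> + \<eta>)))"
    using lborel_pair.integral_snd[OF int, unfolded inner]
    by (simp add: integral_rgauss_density_mult[OF \<sigma> \<eta>])
qed

section \<open>Conditional expectation given a finitely-valued variable\<close>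

lemma integral_indicator_vimage_eq_sum_fibers:
  fixes R :: "'a \<Rightarrow> 'b" and Z :: "'a \<Rightarrow> real"
  assumes fibers: "\<And>r. R -` {r} \<inter> space M \<in> sets M"
    and finite: "finite (R ` space M)" and Z: "integrable M Z"
  shows "(\<integral>x. indicator (R -` B \<inter> space M) x * Z x \<partial>M)
    = (\<Sum>r\<in>R ` space M \<inter> B. \<integral>x. indicator (R -` {r} \<inter> space M) x * Z x \<partial>M)"
proof -
  have "indicator (R -` B \<inter> space M) x * Z x
      = (\<Sum>r\<in>R ` space M \<inter> B. indicator (R -` {r} \<inter> space M) x * Z x)"
    if "x \<in> space M" for x
  proof -
    have "indicator (R -` {r} \<inter> space M) x = (if r = R x then 1 else 0 :: real)" for r
      using that by auto
    then have "(\<Sum>r\<in>R ` space M \<inter> B. indicator (R -` {r} \<inter> space M) x)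
        = (indicator (R -` B \<inter> space M) x :: real)"
      using that finite by (simp add: sum.delta)
    then show ?thesis
      by (simp add: sum_distrib_right[symmetric])
  qed
  then have "(\<integral>x. indicator (R -` B \<inter> space M) x * Z x \<partial>M)
      = (\<integral>x. (\<Sum>r\<in>R ` space M \<inter> B. indicator (R -` {r} \<inter> space M) x * Z x) \<partial>M)"
    by (intro Bochner_Integration.integral_cong) auto
  also have "\<dots> = (\<Sum>r\<in>R ` space M \<inter> B. \<integral>x. indicator (R -` {r} \<inter> space M) x * Z x \<partial>M)"
    using integrable_real_mult_indicator[OF fibers Z]
    by (intro Bochner_Integration.integral_sum) (simp add: mult.commute)
  finally show ?thesis .
qed

lemma real_cond_exp_vimage_finite_range:
  fixes R :: "'a \<Rightarrow> 'b::t1_space" and Y :: "'a \<Rightarrow> real"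
  assumes "finite_measure M"
    and R [measurable]: "R \<in> borel_measurable M" and finite: "finite (R ` space M)"
    and Y: "integrable M Y" and g [measurable]: "g \<in> borel_measurable borel"
    and fiber: "\<And>r. r \<in> R ` space M \<Longrightarrow>
      (\<integral>x. indicator (R -` {r} \<inter> space M) x * Y x \<partial>M) = g r * measure M (R -` {r} \<inter> space M)"
  shows "AE x in M. real_cond_exp M (vimage_algebra (space M) R borel) Y x = g (R x)"
proof -
  interpret finite_measure M by fact
  define F where "F = vimage_algebra (space M) R borel"
  have fibers: "R -` {r} \<inter> space M \<in> sets M" for r
    by (rule measurable_sets[OF R]) (simp add: borel_closed)
  have "subalgebra M F"
    unfolding subalgebra_def F_def using sets_image_in_sets[of M "space M" R borel] by auto
  then interpret sigma_finite_subalgebra M F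
    by (intro finite_measure_subalgebra_is_sigma_finite)
       (simp add: finite_measure_subalgebra_def finite_measure_subalgebra_axioms_def finite_measure_axioms)
  have gR: "integrable M (\<lambda>x. g (R x))"
  proof (rule integrable_const_bound)
    show "AE x in M. norm (g (R x)) \<le> (\<Sum>r\<in>R ` space M. \<bar>g r\<bar>)"
      using finite by (auto intro!: member_le_sum)
  qed simp
  have fiber_gR: "(\<integral>x. indicator (R -` {r} \<inter> space M) x * g (R x) \<partial>M)
      = g r * measure M (R -` {r} \<inter> space M)" for r
  proof -
    have "(\<integral>x. indicator (R -` {r} \<inter> space M) x * g (R x) \<partial>M)
        = (\<integral>x. g r * indicator (R -` {r} \<inter> space M) x \<partial>M)"
      by (intro Bochner_Integration.integral_cong) (auto split: split_indicator)
    then show ?thesis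
      by simp
  qed
  show ?thesis
    unfolding F_def[symmetric]
  proof (rule real_cond_exp_charact)
    fix A assume "A \<in> sets F"
    then obtain B where A: "A = R -` B \<inter> space M"
      unfolding F_def by (subst (asm) sets_vimage_algebra2) auto
    have "(\<integral>x\<in>A. Y x \<partial>M) = (\<Sum>r\<in>R ` space M \<inter> B. \<integral>x. indicator (R -` {r} \<inter> space M) x * Y x \<partial>M)"
      unfolding A set_lebesgue_integral_def
      by (simp add: integral_indicator_vimage_eq_sum_fibers[OF fibers finite Y, of B])
    also have "\<dots> = (\<Sum>r\<in>R ` space M \<inter> B. \<integral>x. indicator (R -` {r} \<inter> space M) x * g (R x) \<partial>M)"
      by (intro sum.cong refl) (simp add: fiber fiber_gR)
    also have "\<dots> = (\<integral>x\<in>A. g (R x) \<partial>M)"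
      unfolding A set_lebesgue_integral_def
      by (simp add: integral_indicator_vimage_eq_sum_fibers[OF fibers finite gR, of B])
    finally show "(\<integral>x\<in>A. Y x \<partial>M) = (\<integral>x\<in>A. g (R x) \<partial>M)" .
  next
    show "(\<lambda>x. g (R x)) \<in> borel_measurable F"
      unfolding F_def by (intro measurable_compose[OF measurable_vimage_algebra1 g]) simp
  qed (use Y gR in auto)
qed

section \<open>Lebesgue measure on pairs of complex numbers\<close>

definition complex_pair_of_parts :: "(real \<times> real) \<times> (real \<times> real) \<Rightarrow> complex \<times> complex" where
  "complex_pair_of_parts p = (Complex (fst (fst p)) (fst (snd p)), Complex (snd (fst p)) (snd (snd p)))"

lemma complex_pair_of_parts_simp [simp]:
  "complex_pair_of_parts ((a, c), (b, d)) = (Complex a b, Complex c d)"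
  by (simp add: complex_pair_of_parts_def)

lemma borel_measurable_Complex [measurable]:
  fixes f g :: "'a \<Rightarrow> real"
  assumes [measurable]: "f \<in> borel_measurable M" "g \<in> borel_measurable M"
  shows "(\<lambda>x. Complex (f x) (g x)) \<in> borel_measurable M"
proof -
  have "(\<lambda>x. Complex (f x) (g x)) = (\<lambda>x. complex_of_real (f x) + \<i> * complex_of_real (g x))"
    by (auto simp: complex_eq_iff)
  then show ?thesis
    by simp
qed

lemma measurable_complex_pair_of_parts [measurable]:
  "complex_pair_of_parts \<in> (lborel \<Otimes>\<^sub>M lborel) \<Otimes>\<^sub>M (lborel \<Otimes>\<^sub>M lborel) \<rightarrow>\<^sub>M borel"
  unfolding complex_pair_of_parts_def by measurable

lemma lborel_complex_pair_eq_distr_parts: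
  "(lborel :: (complex \<times> complex) measure)
    = distr ((lborel \<Otimes>\<^sub>M lborel) \<Otimes>\<^sub>M (lborel \<Otimes>\<^sub>M lborel)) borel
        complex_pair_of_parts"
  (is "_ = distr ?R4 borel ?\<rho>")
proof (rule lborel_eqI)
  fix l u :: "complex \<times> complex"
  assume le: "\<And>b. b \<in> Basis \<Longrightarrow> l \<bullet> b \<le> u \<bullet> b"
  obtain l1 l2 u1 u2 where lu: "l = (l1, l2)" "u = (u1, u2)"
    by (cases l, cases u)
  have "(1, 0) \<in> (Basis :: (complex \<times> complex) set)" "(\<i>, 0) \<in> (Basis :: (complex \<times> complex) set)"
    "(0, 1) \<in> (Basis :: (complex \<times> complex) set)" "(0, \<i>) \<in> (Basis :: (complex \<times> complex) set)"
    by (auto simp: Basis_prod_def Basis_complex_def)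
  from this[THEN le] have le_parts:
      "Re l1 \<le> Re u1" "Im l1 \<le> Im u1" "Re l2 \<le> Re u2" "Im l2 \<le> Im u2"
    by (auto simp: lu)
  have L2: "sigma_finite_measure ((lborel :: real measure) \<Otimes>\<^sub>M (lborel :: real measure))"
    by (simp add: lborel_prod lborel.sigma_finite_measure_axioms)
  have "?\<rho> -` box l u \<inter> space ?R4 =
      ({Re l1<..<Re u1} \<times> {Re l2<..<Re u2}) \<times> ({Im l1<..<Im u1} \<times> {Im l2<..<Im u2})"
    by (auto simp: lu box_def Basis_prod_def Basis_complex_def space_pair_measure complex_pair_of_parts_def)
  then have "emeasure (distr ?R4 borel ?\<rho>) (box l u)
      = emeasure ?R4 (({Re l1<..<Re u1} \<times> {Re l2<..<Re u2}) \<times> ({Im l1<..<Im u1} \<times> {Im l2<..<Im u2}))"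
    by (subst emeasure_distr) auto
  also have "\<dots> = ennreal ((Re u1 - Re l1) * (Re u2 - Re l2) * ((Im u1 - Im l1) * (Im u2 - Im l2)))"
    using le_parts
    by (simp add: sigma_finite_measure.emeasure_pair_measure_Times[OF L2] lborel.emeasure_pair_measure_Times ennreal_mult)
  also have "\<dots> = (\<Prod>b\<in>Basis. (u - l) \<bullet> b)"
    by (simp add: lu Basis_prod_def Basis_complex_def prod.union_disjoint prod.reindex inj_on_def ac_simps)
  finally show "emeasure (distr ?R4 borel ?\<rho>) (box l u) = (\<Prod>b\<in>Basis. (u - l) \<bullet> b)" .
qed simp

lemma
  fixes F :: "complex \<times> complex \<Rightarrow> real"
  assumes [measurable]: "F \<in> borel_measurable (borel \<Otimes>\<^sub>M borel)"
  shows integrable_complex_pair_iff_parts: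
      "integrable (lborel \<Otimes>\<^sub>M lborel) F \<longleftrightarrow>
        integrable ((lborel \<Otimes>\<^sub>M lborel) \<Otimes>\<^sub>M (lborel \<Otimes>\<^sub>M lborel))
          (\<lambda>p. F (complex_pair_of_parts p))"
    and integral_complex_pair_eq_parts:
      "integral\<^sup>L (lborel \<Otimes>\<^sub>M lborel) F =
        integral\<^sup>L ((lborel \<Otimes>\<^sub>M lborel) \<Otimes>\<^sub>M (lborel \<Otimes>\<^sub>M lborel))
          (\<lambda>p. F (complex_pair_of_parts p))"
proof -
  have lborel_complex_pair: "lborel \<Otimes>\<^sub>M lborel = (lborel :: (complex \<times> complex) measure)"
    by (rule lborel_prod)
  have F_borel: "F \<in> borel_measurable borel"
    by (simp add: borel_prod[symmetric])
  show "integrable (lborel \<Otimes>\<^sub>M lborel) F \<longleftrightarrow>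
      integrable ((lborel \<Otimes>\<^sub>M lborel) \<Otimes>\<^sub>M (lborel \<Otimes>\<^sub>M lborel))
        (\<lambda>p. F (complex_pair_of_parts p))"
    unfolding lborel_complex_pair lborel_complex_pair_eq_distr_parts
    using integrable_distr_eq[OF measurable_complex_pair_of_parts F_borel] by simp
  show "integral\<^sup>L (lborel \<Otimes>\<^sub>M lborel) F =
      integral\<^sup>L ((lborel \<Otimes>\<^sub>M lborel) \<Otimes>\<^sub>M (lborel \<Otimes>\<^sub>M lborel))
        (\<lambda>p. F (complex_pair_of_parts p))"
    unfolding lborel_complex_pair lborel_complex_pair_eq_distr_parts
    using integral_distr[OF measurable_complex_pair_of_parts F_borel] by simp
qed

section \<open>The quantized Gaussian mixture\<close>

lemma Re_Qb [simp]: "Re (Qb z) = sgn (Re z) / sqrt 2"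
  and Im_Qb [simp]: "Im (Qb z) = sgn (Im z) / sqrt 2"
  by (simp_all add: Qb_def)

lemma Qb_eq_Qb_iff: "Qb z = Qb w \<longleftrightarrow> sgn (Re z) = sgn (Re w) \<and> sgn (Im z) = sgn (Im w)"
  by (simp add: complex_eq_iff)

lemma finite_range_Qb: "finite (range Qb)"
proof (rule finite_subset)
  have "Qb z = (\<lambda>(a, b). Complex a b / complex_of_real (sqrt 2)) (sgn (Re z), sgn (Im z))"
    and "(sgn (Re z), sgn (Im z)) \<in> {-1, 0, 1} \<times> {-1, 0, 1}" for z
    by (simp_all add: Qb_def sgn_real_def)
  then show "range Qb \<subseteq> (\<lambda>(a, b). Complex a b / complex_of_real (sqrt 2)) ` ({-1, 0, 1} \<times> {-1, 0, 1})"
    by blast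
qed simp

lemma borel_measurable_Qb [measurable]: "Qb \<in> borel_measurable borel"
  unfolding Qb_def by measurable

locale quantized_gauss_mixture = prob_space M for M :: "'a measure" +
  fixes K :: nat and p \<sigma>2 :: "nat \<Rightarrow> real" and \<eta>2 :: real and h n :: "'a \<Rightarrow> complex"
  assumes p_pos: "\<And>k. k \<in> {1..K} \<Longrightarrow> p k > 0"
    and sum_p: "(\<Sum>k\<in>{1..K}. p k) = 1"
    and \<sigma>2_pos: "\<And>k. k \<in> {1..K} \<Longrightarrow> \<sigma>2 k > 0"
    and \<eta>2_pos: "\<eta>2 > 0"
    and distributed_h:
      "distributed M lborel h (\<lambda>z. ennreal (\<Sum>k\<in>{1..K}. p k * cgauss_density (\<sigma>2 k) z))"
    and distributed_n: "distributed M lborel n (\<lambda>z. ennreal (cgauss_density \<eta>2 z))"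
    and indep_h_n: "indep_var borel h borel n"
begin

lemma borel_measurable_h [measurable]: "h \<in> borel_measurable M"
  and borel_measurable_n [measurable]: "n \<in> borel_measurable M"
  using distributed_h distributed_n by (auto simp: distributed_def)

definition h_density :: "complex \<Rightarrow> real" where
  "h_density z = (\<Sum>k\<in>{1..K}. p k * cgauss_density (\<sigma>2 k) z)"

lemma h_density_nonneg: "0 \<le> h_density z"
  unfolding h_density_def using p_pos \<sigma>2_pos
  by (intro sum_nonneg mult_nonneg_nonneg) (auto simp: cgauss_density_nonneg less_imp_le)

lemma h_density_Complex:
  "h_density (Complex a b) = (\<Sum>k\<in>{1..K}. p k * (rgauss_density (\<sigma>2 k) a * rgauss_density (\<sigma>2 k) b))"
  unfolding h_density_def using \<sigma>2_pos by (intro sum.cong) (simp_all add: cgauss_density_eq_rgauss_density)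

definition joint_density :: "complex \<times> complex \<Rightarrow> real" where
  "joint_density zw = h_density (fst zw) * cgauss_density \<eta>2 (snd zw)"

lemma joint_density_nonneg: "0 \<le> joint_density zw"
  by (simp add: joint_density_def h_density_nonneg cgauss_density_nonneg \<eta>2_pos)

lemma distributed_h_n:
  "distributed M (lborel \<Otimes>\<^sub>M lborel) (\<lambda>x. (h x, n x)) (\<lambda>zw. ennreal (joint_density zw))"
proof -
  have "indep_var lborel h lborel n"
    using indep_h_n by (simp add: indep_var_def indep_vars_def bool.case_eq_if)
  then have "distributed M (lborel \<Otimes>\<^sub>M lborel) (\<lambda>x. (h x, n x))
      (\<lambda>(z, w). ennreal (h_density z) * ennreal (cgauss_density \<eta>2 w))"
    using distributed_h distributed_n unfolding h_density_def[symmetric]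
    by (intro distributed_joint_indep lborel.sigma_finite_measure_axioms)
  then show ?thesis
    by (simp add: joint_density_def ennreal_mult h_density_nonneg cgauss_density_nonneg \<eta>2_pos
        case_prod_beta')
qed

(* In the k-th mixture component, (Re h, Re n) and (Im h, Im n) are independent,
   each with this joint density. *)
definition component_density :: "nat \<Rightarrow> real \<Rightarrow> real \<Rightarrow> real" where
  "component_density k a u = rgauss_density (\<sigma>2 k) a * rgauss_density \<eta>2 u"

lemma joint_density_Complex:
  "joint_density (Complex a b, Complex c d)
    = (\<Sum>k\<in>{1..K}. p k * component_density k a c * component_density k b d)"
  by (simp add: joint_density_def component_density_def h_density_Complex cgauss_density_eq_rgauss_density
      \<eta>2_pos sum_distrib_left sum_distrib_right mult_ac)

definition component_expectation :: "nat \<Rightarrow> (real \<Rightarrow> real \<Rightarrow> real) \<Rightarrow> real" where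
  "component_expectation k A = integral\<^sup>L (lborel \<Otimes>\<^sub>M lborel) (\<lambda>(a, u). A a u * component_density k a u)"

lemma
  fixes A B :: "real \<Rightarrow> real \<Rightarrow> real"
  assumes [measurable]: "(\<lambda>(a, u). A a u) \<in> borel_measurable (borel \<Otimes>\<^sub>M borel)"
      "(\<lambda>(a, u). B a u) \<in> borel_measurable (borel \<Otimes>\<^sub>M borel)"
    and A: "\<And>k. k \<in> {1..K} \<Longrightarrow>
      integrable (lborel \<Otimes>\<^sub>M lborel) (\<lambda>(a, u). A a u * component_density k a u)"
    and B: "\<And>k. k \<in> {1..K} \<Longrightarrow>
      integrable (lborel \<Otimes>\<^sub>M lborel) (\<lambda>(a, u). B a u * component_density k a u)"
  shows integrable_re_im_product:
      "integrable M (\<lambda>x. A (Re (h x)) (Re (n x)) * B (Im (h x)) (Im (n x)))"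
    and integral_re_im_product:
      "(\<integral>x. A (Re (h x)) (Re (n x)) * B (Im (h x)) (Im (n x)) \<partial>M)
        = (\<Sum>k\<in>{1..K}. p k * component_expectation k A * component_expectation k B)"
proof -
  define G where "G zw = A (Re (fst zw)) (Re (snd zw)) * B (Im (fst zw)) (Im (snd zw))" for zw
  define Ak where "Ak k = (\<lambda>(a, u). A a u * component_density k a u)" for k
  define Bk where "Bk k = (\<lambda>(a, u). B a u * component_density k a u)" for k
  let ?R4 = "(lborel \<Otimes>\<^sub>M lborel) \<Otimes>\<^sub>M (lborel \<Otimes>\<^sub>M lborel) :: ((real \<times> real) \<times> (real \<times> real)) measure"
  have [measurable]: "G \<in> borel_measurable (borel \<Otimes>\<^sub>M borel)"
    "joint_density \<in> borel_measurable (borel \<Otimes>\<^sub>M borel)"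
    unfolding G_def joint_density_def h_density_def cgauss_density_def by measurable
  have parts: "joint_density (complex_pair_of_parts q) * G (complex_pair_of_parts q)
      = (\<Sum>k\<in>{1..K}. p k * (case q of (x, y) \<Rightarrow> Ak k x * Bk k y))" for q
    by (cases q) (auto simp: joint_density_Complex G_def Ak_def Bk_def sum_distrib_left mult_ac)
  have L2: "sigma_finite_measure ((lborel :: real measure) \<Otimes>\<^sub>M (lborel :: real measure))"
    by (simp add: lborel_prod lborel.sigma_finite_measure_axioms)
  have int_k: "integrable ?R4 (\<lambda>(x, y). Ak k x * Bk k y)"
    and integral_k: "integral\<^sup>L ?R4 (\<lambda>(x, y). Ak k x * Bk k y)
      = component_expectation k A * component_expectation k B"
    if "k \<in> {1..K}" for k
    using integrable_pair_measure_mult[OF L2 L2 A[OF that] B[OF that]]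
      integral_pair_measure_mult[OF L2 L2 A[OF that] B[OF that]]
    by (simp_all add: Ak_def Bk_def component_expectation_def)
  have "integrable ?R4 (\<lambda>q. joint_density (complex_pair_of_parts q) * G (complex_pair_of_parts q))"
    unfolding parts using int_k by (intro Bochner_Integration.integrable_sum integrable_mult_right) auto
  then have "integrable (lborel \<Otimes>\<^sub>M lborel) (\<lambda>zw. joint_density zw * G zw)"
    by (subst integrable_complex_pair_iff_parts) simp_all
  then show "integrable M (\<lambda>x. A (Re (h x)) (Re (n x)) * B (Im (h x)) (Im (n x)))"
    using distributed_integrable[OF distributed_h_n, of G] by (simp add: joint_density_nonneg G_def)
  have "(\<integral>x. A (Re (h x)) (Re (n x)) * B (Im (h x)) (Im (n x)) \<partial>M)
      = integral\<^sup>L (lborel \<Otimes>\<^sub>M lborel) (\<lambda>zw. joint_density zw * G zw)"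
    using distributed_integral[OF distributed_h_n, of G] by (simp add: joint_density_nonneg G_def)
  also have "\<dots> = integral\<^sup>L ?R4 (\<lambda>q. joint_density (complex_pair_of_parts q) * G (complex_pair_of_parts q))"
    by (rule integral_complex_pair_eq_parts) simp
  also have "\<dots> = (\<Sum>k\<in>{1..K}. p k * component_expectation k A * component_expectation k B)"
    unfolding parts using int_k integral_k
    by (subst Bochner_Integration.integral_sum) (auto intro: integrable_mult_right simp: mult.assoc)
  finally show "(\<integral>x. A (Re (h x)) (Re (n x)) * B (Im (h x)) (Im (n x)) \<partial>M)
      = (\<Sum>k\<in>{1..K}. p k * component_expectation k A * component_expectation k B)" .
qed

definition cond_mean_gain :: real where
  "cond_mean_gain = sqrt (2 / pi) * (\<Sum>k\<in>{1..K}. p k * \<sigma>2 k / sqrt (\<sigma>2 k + \<eta>2))"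

definition sign_event :: "real \<Rightarrow> real \<Rightarrow> 'a set" where
  "sign_event s1 s2 = {x \<in> space M. sgn (Re (h x + n x)) = s1 \<and> sgn (Im (h x + n x)) = s2}"

lemma
  assumes "s \<in> {-1, 0, 1}" "k \<in> {1..K}"
  shows integrable_component_sgn_add:
      "integrable (lborel \<Otimes>\<^sub>M lborel)
        (\<lambda>(a, u). (if sgn (a + u) = s then 1 else 0) * component_density k a u)"
    and component_expectation_sgn_add:
      "component_expectation k (\<lambda>a u. if sgn (a + u) = s then 1 else 0) = \<bar>s\<bar> / 2"
  using assms \<sigma>2_pos[OF assms(2)] \<eta>2_pos
  by (simp_all add: component_expectation_def component_density_def
      integrable_sgn_add_even_densities integral_sgn_add_even_densities)

lemma measurable_sgn_add_indicator:
  "(\<lambda>(a, u). if sgn (a + u) = (s :: real) then 1 else 0 :: real) \<in> borel_measurable (borel \<Otimes>\<^sub>M borel)"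
  by measurable

lemma prob_sign_event:
  assumes s1: "s1 \<in> {-1, 0, 1}" and s2: "s2 \<in> {-1, 0, 1}"
  shows "prob (sign_event s1 s2) = \<bar>s1\<bar> * \<bar>s2\<bar> / 4"
proof -
  let ?I = "\<lambda>s a u. if sgn (a + u) = s then 1 else 0 :: real"
  have "prob (sign_event s1 s2) = integral\<^sup>L M (indicator (sign_event s1 s2))"
    by (simp add: sign_event_def)
  also have "\<dots> = (\<integral>x. ?I s1 (Re (h x)) (Re (n x)) * ?I s2 (Im (h x)) (Im (n x)) \<partial>M)"
    by (intro Bochner_Integration.integral_cong) (auto simp: sign_event_def split: split_indicator)
  also have "\<dots> = (\<Sum>k\<in>{1..K}. p k * component_expectation k (?I s1) * component_expectation k (?I s2))"
    by (intro integral_re_im_product measurable_sgn_add_indicator integrable_component_sgn_add s1 s2)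
  also have "\<dots> = (\<Sum>k\<in>{1..K}. p k * (\<bar>s1\<bar> / 2) * (\<bar>s2\<bar> / 2))"
  proof (intro sum.cong refl)
    fix k assume k: "k \<in> {1..K}"
    show "p k * component_expectation k (?I s1) * component_expectation k (?I s2) = p k * (\<bar>s1\<bar> / 2) * (\<bar>s2\<bar> / 2)"
      by (simp only: component_expectation_sgn_add[OF s1 k] component_expectation_sgn_add[OF s2 k])
  qed
  also have "\<dots> = \<bar>s1\<bar> * \<bar>s2\<bar> / 4"
    by (simp only: sum_distrib_right[symmetric] sum_p)
  finally show ?thesis .
qed

lemma
  assumes s: "s \<in> {-1, 0, 1}" and k: "k \<in> {1..K}"
  shows integrable_component_sgn_add_moment_1:
      "integrable (lborel \<Otimes>\<^sub>M lborel)
        (\<lambda>(a, u). (if sgn (a + u) = s then 1 else 0) * a * component_density k a u)"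
    and component_expectation_sgn_add_moment_1:
      "component_expectation k (\<lambda>a u. (if sgn (a + u) = s then 1 else 0) * a)
        = s * \<sigma>2 k / (2 * sqrt (pi * (\<sigma>2 k + \<eta>2)))"
  using integrable_sgn_add_rgauss_pair_moment_1[OF \<sigma>2_pos[OF k] \<eta>2_pos s]
    integral_sgn_add_rgauss_pair_moment_1[OF \<sigma>2_pos[OF k] \<eta>2_pos s]
  by (simp_all add: component_expectation_def component_density_def)

lemma mixture_sgn_add_moment_1:
  assumes s: "s \<in> {-1, 0, 1}"
  shows "(\<Sum>k\<in>{1..K}. p k * component_expectation k (\<lambda>a u. (if sgn (a + u) = s then 1 else 0) * a))
    = cond_mean_gain * (s / sqrt 2) * (\<bar>s\<bar> / 2)"
proof -
  have "(\<Sum>k\<in>{1..K}. p k * component_expectation k (\<lambda>a u. (if sgn (a + u) = s then 1 else 0) * a))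
      = (\<Sum>k\<in>{1..K}. s / (2 * sqrt pi) * (p k * \<sigma>2 k / sqrt (\<sigma>2 k + \<eta>2)))"
  proof (intro sum.cong refl)
    fix k assume k: "k \<in> {1..K}"
    show "p k * component_expectation k (\<lambda>a u. (if sgn (a + u) = s then 1 else 0) * a)
        = s / (2 * sqrt pi) * (p k * \<sigma>2 k / sqrt (\<sigma>2 k + \<eta>2))"
      unfolding component_expectation_sgn_add_moment_1[OF s k] by (simp add: real_sqrt_mult mult_ac)
  qed
  also have "\<dots> = cond_mean_gain * (s / sqrt 2) * (\<bar>s\<bar> / 2)"
  proof -
    have "s * \<bar>s\<bar> = s"
      using s by auto
    then show ?thesis
      unfolding cond_mean_gain_def sum_distrib_left[symmetric] real_sqrt_divide
      by (simp add: field_simps) blast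
  qed
  finally show ?thesis .
qed

lemma measurable_sgn_add_moment_1:
  "(\<lambda>(a, u). (if sgn (a + u) = (s :: real) then 1 else 0) * a :: real) \<in> borel_measurable (borel \<Otimes>\<^sub>M borel)"
  by measurable

lemma
  assumes s1: "s1 \<in> {-1, 0, 1}" and s2: "s2 \<in> {-1, 0, 1}"
  shows integral_Re_sign_event:
      "(\<integral>x. indicator (sign_event s1 s2) x * Re (h x) \<partial>M)
        = cond_mean_gain * (s1 / sqrt 2) * prob (sign_event s1 s2)"
    and integral_Im_sign_event:
      "(\<integral>x. indicator (sign_event s1 s2) x * Im (h x) \<partial>M)
        = cond_mean_gain * (s2 / sqrt 2) * prob (sign_event s1 s2)"
proof -
  let ?I = "\<lambda>s a u. if sgn (a + u) = s then 1 else 0 :: real"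
  let ?X = "\<lambda>s a u. (if sgn (a + u) = s then 1 else 0) * a :: real"
  have "(\<integral>x. indicator (sign_event s1 s2) x * Re (h x) \<partial>M)
      = (\<integral>x. ?X s1 (Re (h x)) (Re (n x)) * ?I s2 (Im (h x)) (Im (n x)) \<partial>M)"
    by (intro Bochner_Integration.integral_cong) (auto simp: sign_event_def split: split_indicator)
  also have "\<dots> = (\<Sum>k\<in>{1..K}. p k * component_expectation k (?X s1) * component_expectation k (?I s2))"
    by (intro integral_re_im_product measurable_sgn_add_moment_1 measurable_sgn_add_indicator
        integrable_component_sgn_add_moment_1 integrable_component_sgn_add s1 s2)
  also have "\<dots> = (\<Sum>k\<in>{1..K}. p k * component_expectation k (?X s1)) * (\<bar>s2\<bar> / 2)"
    unfolding sum_distrib_right by (intro sum.cong refl) (simp only: component_expectation_sgn_add[OF s2])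
  also have "\<dots> = cond_mean_gain * (s1 / sqrt 2) * prob (sign_event s1 s2)"
    unfolding mixture_sgn_add_moment_1[OF s1] prob_sign_event[OF s1 s2] by simp
  finally show "(\<integral>x. indicator (sign_event s1 s2) x * Re (h x) \<partial>M)
      = cond_mean_gain * (s1 / sqrt 2) * prob (sign_event s1 s2)" .
  have "(\<integral>x. indicator (sign_event s1 s2) x * Im (h x) \<partial>M)
      = (\<integral>x. ?I s1 (Re (h x)) (Re (n x)) * ?X s2 (Im (h x)) (Im (n x)) \<partial>M)"
    by (intro Bochner_Integration.integral_cong) (auto simp: sign_event_def split: split_indicator)
  also have "\<dots> = (\<Sum>k\<in>{1..K}. p k * component_expectation k (?I s1) * component_expectation k (?X s2))"
    by (intro integral_re_im_product measurable_sgn_add_moment_1 measurable_sgn_add_indicator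
        integrable_component_sgn_add_moment_1 integrable_component_sgn_add s1 s2)
  also have "\<dots> = (\<bar>s1\<bar> / 2) * (\<Sum>k\<in>{1..K}. p k * component_expectation k (?X s2))"
    unfolding sum_distrib_left by (intro sum.cong refl) (simp only: component_expectation_sgn_add[OF s1] mult_ac)
  also have "\<dots> = cond_mean_gain * (s2 / sqrt 2) * prob (sign_event s1 s2)"
    unfolding mixture_sgn_add_moment_1[OF s2] prob_sign_event[OF s1 s2] by (simp add: mult_ac)
  finally show "(\<integral>x. indicator (sign_event s1 s2) x * Im (h x) \<partial>M)
      = cond_mean_gain * (s2 / sqrt 2) * prob (sign_event s1 s2)" .
qed

lemma
  assumes k: "k \<in> {1..K}"
  shows integrable_component_fst: "integrable (lborel \<Otimes>\<^sub>M lborel) (\<lambda>(a, u). a * component_density k a u)"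
    and integrable_component_density: "integrable (lborel \<Otimes>\<^sub>M lborel) (\<lambda>(a, u). 1 * component_density k a u)"
  using integrable_pair_measure_mult[OF lborel.sigma_finite_measure_axioms lborel.sigma_finite_measure_axioms
      integrable_rgauss_density_moment_1[OF \<sigma>2_pos[OF k]] integrable_rgauss_density[OF \<eta>2_pos]]
    integrable_pair_measure_mult[OF lborel.sigma_finite_measure_axioms lborel.sigma_finite_measure_axioms
      integrable_rgauss_density[OF \<sigma>2_pos[OF k]] integrable_rgauss_density[OF \<eta>2_pos]]
  by (simp_all add: component_density_def mult.assoc)

lemma integrable_Re_h: "integrable M (\<lambda>x. Re (h x))"
proof -
  have "integrable M (\<lambda>x. Re (h x) * 1)"
    by (rule integrable_re_im_product[where A = "\<lambda>a u. a" and B = "\<lambda>b w. 1"])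
       (measurable, measurable, (rule integrable_component_fst integrable_component_density; assumption)+)
  then show ?thesis
    by simp
qed

lemma integrable_Im_h: "integrable M (\<lambda>x. Im (h x))"
proof -
  have "integrable M (\<lambda>x. 1 * Im (h x))"
    by (rule integrable_re_im_product[where A = "\<lambda>a u. 1" and B = "\<lambda>b w. b"])
       (measurable, measurable, (rule integrable_component_fst integrable_component_density; assumption)+)
  then show ?thesis
    by simp
qed

theorem complex_cond_exp_Qb:
  "AE x in M. complex_cond_exp M (vimage_algebra (space M) (\<lambda>y. Qb (h y + n y)) borel) h x
    = complex_of_real cond_mean_gain * Qb (h x + n x)"
proof -
  let ?R = "\<lambda>y. Qb (h y + n y)"
  let ?F = "vimage_algebra (space M) ?R borel"
  have sgn: "sgn t \<in> {-1, 0, 1}" for t :: real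
    by (simp add: sgn_real_def)
  have fiber: "?R -` {?R x} \<inter> space M = sign_event (sgn (Re (h x + n x))) (sgn (Im (h x + n x)))" for x
    by (auto simp: sign_event_def Qb_eq_Qb_iff)
  have finite: "finite (?R ` space M)"
    by (rule finite_subset[OF _ finite_range_Qb]) auto
  have "AE x in M. real_cond_exp M ?F (\<lambda>y. Re (h y)) x = cond_mean_gain * Re (?R x)"
  proof (rule real_cond_exp_vimage_finite_range[OF finite_measure_axioms _ finite integrable_Re_h])
    show "(\<integral>y. indicator (?R -` {r} \<inter> space M) y * Re (h y) \<partial>M)
        = cond_mean_gain * Re r * measure M (?R -` {r} \<inter> space M)" if "r \<in> ?R ` space M" for r
      using that unfolding image_iff by (auto simp only: fiber integral_Re_sign_event[OF sgn sgn] Re_Qb)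
  qed simp_all
  moreover have "AE x in M. real_cond_exp M ?F (\<lambda>y. Im (h y)) x = cond_mean_gain * Im (?R x)"
  proof (rule real_cond_exp_vimage_finite_range[OF finite_measure_axioms _ finite integrable_Im_h])
    show "(\<integral>y. indicator (?R -` {r} \<inter> space M) y * Im (h y) \<partial>M)
        = cond_mean_gain * Im r * measure M (?R -` {r} \<inter> space M)" if "r \<in> ?R ` space M" for r
      using that unfolding image_iff by (auto simp only: fiber integral_Im_sign_event[OF sgn sgn] Im_Qb)
  qed simp_all
  ultimately show ?thesis
    by eventually_elim (simp add: complex_cond_exp_def complex_eq_iff)
qed

end

theorem theorem2:
  fixes M :: "'a measure"
    and K :: nat and p \<sigma>2 :: "nat \<Rightarrow> real" and \<eta>2 :: real
    and h n :: "'a \<Rightarrow> complex"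
  assumes "prob_space M"
    and "\<And>k. k \<in> {1..K} \<Longrightarrow> p k > 0"
    and "(\<Sum>k\<in>{1..K}. p k) = 1"
    and "\<And>k. k \<in> {1..K} \<Longrightarrow> \<sigma>2 k > 0"
    and "\<eta>2 > 0"
    and "distributed M lborel h
           (\<lambda>z. ennreal (\<Sum>k\<in>{1..K}. p k * cgauss_density (\<sigma>2 k) z))"
    and "distributed M lborel n (\<lambda>z. ennreal (cgauss_density \<eta>2 z))"
    and "prob_space.indep_var M borel h borel n"
  shows "AE x in M.
           complex_cond_exp M (vimage_algebra (space M) (\<lambda>y. Qb (h y + n y)) borel) h x
           = complex_of_real (sqrt (2 / pi) *
               (\<Sum>k\<in>{1..K}. p k * \<sigma>2 k / sqrt (\<sigma>2 k + \<eta>2)))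
             * Qb (h x + n x)"
proof -
  interpret quantized_gauss_mixture M K p \<sigma>2 \<eta>2 h n
    using assms by (simp add: quantized_gauss_mixture_def quantized_gauss_mixture_axioms_def)
  show ?thesis
    using complex_cond_exp_Qb unfolding cond_mean_gain_def .
qed

end
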